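(* Let $R=K[x_1,\ldots,x_n]$ be a polynomial ring over a field $K$, $I\subset R$ a monomial ideal, $\ell$ a positive integer, $v$ a square-free monomial of $R$ with $v\in I^\ell$, and $\mathfrak{p}$ a monomial prime ideal of $R$ such that, for some positive integer $s$, $\mathfrak{p}\setminus x_i\notin\mathrm{Ass}(R/(I\setminus x_i)^s)$ for every variable $x_i$ dividing $v$. If $\mathfrak{p}\in\mathrm{Ass}(R/I^s)$, then $s>\ell$.
   Context: For a monomial ideal $I\subset R$, $\mathcal{G}(I)$ denotes its unique minimal set of monomial generators. For a variable $x_i$, the deletion $I\setminus x_i$ is the monomial ideal of $R$ generated by those $u\in\mathcal{G}(I)$ with $x_i\nmid u$. For a monomial prime ideal $\mathfrak{p}$ (generated by variables), $\mathfrak{p}\setminus x_i$ is the ideal generated by the variables of $\mathfrak{p}$ other than $x_i$. *)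

theory Defs
  imports Main "HOL-Library.Poly_Mapping"
begin

text \<open>The polynomial ring K[x_v : v in 'v] over a field 'k, with a finite type 'v of
  variables, is modelled as the type of finitely supported functions from exponent
  vectors ('v =>0 nat) to coefficients in 'k (library type poly_mapping, a comm_ring_1).\<close>

type_synonym ('v, 'k) mpoly = "('v \<Rightarrow>\<^sub>0 nat) \<Rightarrow>\<^sub>0 'k"

definition is_ideal :: "('v, 'k::field) mpoly set \<Rightarrow> bool" where
  "is_ideal I \<longleftrightarrow> 0 \<in> I \<and> (\<forall>a\<in>I. \<forall>b\<in>I. a + b \<in> I) \<and> (\<forall>r. \<forall>a\<in>I. r * a \<in> I)"

definition ideal_gen :: "('v, 'k::field) mpoly set \<Rightarrow> ('v, 'k) mpoly set" where
  "ideal_gen S = \<Inter> {I. is_ideal I \<and> S \<subseteq> I}"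

definition is_prime_ideal :: "('v, 'k::field) mpoly set \<Rightarrow> bool" where
  "is_prime_ideal P \<longleftrightarrow> is_ideal P \<and> P \<noteq> UNIV \<and> (\<forall>a b. a * b \<in> P \<longrightarrow> a \<in> P \<or> b \<in> P)"

definition monom :: "('v \<Rightarrow>\<^sub>0 nat) \<Rightarrow> ('v, 'k::field) mpoly" where
  "monom a = Poly_Mapping.single a 1"

definition monomials :: "('v, 'k::field) mpoly set" where
  "monomials = range monom"

definition var :: "'v \<Rightarrow> ('v, 'k::field) mpoly" where
  "var i = monom (Poly_Mapping.single i 1)"

definition squarefree_monomial :: "('v, 'k::field) mpoly \<Rightarrow> bool" where
  "squarefree_monomial u \<longleftrightarrow> (\<exists>a. u = monom a \<and> (\<forall>i. Poly_Mapping.lookup a i \<le> 1))"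

definition monomial_ideal :: "('v, 'k::field) mpoly set \<Rightarrow> bool" where
  "monomial_ideal I \<longleftrightarrow> (\<exists>S \<subseteq> monomials. I = ideal_gen S)"

definition min_gens :: "('v, 'k::field) mpoly set \<Rightarrow> ('v, 'k) mpoly set" where
  "min_gens I = {u \<in> monomials \<inter> I. \<forall>w \<in> monomials \<inter> I. w dvd u \<longrightarrow> w = u}"

definition ideal_del :: "('v, 'k::field) mpoly set \<Rightarrow> 'v \<Rightarrow> ('v, 'k) mpoly set" where
  "ideal_del I i = ideal_gen {u \<in> min_gens I. \<not> var i dvd u}"

definition monomial_prime :: "('v, 'k::field) mpoly set \<Rightarrow> bool" where
  "monomial_prime P \<longleftrightarrow> (\<exists>S. P = ideal_gen (var ` S))"

definition prime_del :: "('v, 'k::field) mpoly set \<Rightarrow> 'v \<Rightarrow> ('v, 'k) mpoly set" where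
  "prime_del P i = ideal_gen (var ` {j. var j \<in> P \<and> j \<noteq> i})"

definition ideal_pow :: "('v, 'k::field) mpoly set \<Rightarrow> nat \<Rightarrow> ('v, 'k) mpoly set" where
  "ideal_pow I s = ideal_gen {prod_list fs | fs. length fs = s \<and> set fs \<subseteq> I}"

text \<open>Ass(R/J): prime ideals of the form (J : f).\<close>
definition Ass :: "('v, 'k::field) mpoly set \<Rightarrow> ('v, 'k) mpoly set set" where
  "Ass J = {P. is_prime_ideal P \<and> (\<exists>f. P = {g. g * f \<in> J})}"

end

theory Submission
  imports Defs
begin

text \<open>Suppose \<open>s \<le> l\<close>, so that \<open>v \<in> I\<^sup>l \<subseteq> I\<^sup>s\<close>. Since \<open>I\<^sup>s\<close> is a monomial ideal and
  \<open>\<pp>\<close> is generated by variables, the colon description \<open>\<pp> = (I\<^sup>s : f)\<close> can be replaced by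
  \<open>\<pp> = (I\<^sup>s : t)\<close> for a single term \<open>t\<close> of \<open>f\<close>, with \<open>t \<notin> I\<^sup>s\<close>. The squarefree monomial
  \<open>v \<in> I\<^sup>s\<close> does not divide \<open>t\<close>, so some variable \<open>x\<^sub>i\<close> divides \<open>v\<close> but not \<open>t\<close>.
  A monomial free of \<open>x\<^sub>i\<close> lies in \<open>I\<^sup>s\<close> iff it lies in \<open>(I \<setminus> x\<^sub>i)\<^sup>s\<close>, and membership in
  \<open>(I \<setminus> x\<^sub>i)\<^sup>s\<close> ignores the exponent of \<open>x\<^sub>i\<close>. Hence \<open>\<pp> \<setminus> x\<^sub>i = ((I \<setminus> x\<^sub>i)\<^sup>s : t)\<close> is an
  associated prime of \<open>(I \<setminus> x\<^sub>i)\<^sup>s\<close>, contrary to the hypothesis.\<close>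

definition exp_dvd :: "('v \<Rightarrow>\<^sub>0 nat) \<Rightarrow> ('v \<Rightarrow>\<^sub>0 nat) \<Rightarrow> bool" where
  "exp_dvd b a \<longleftrightarrow> (\<exists>c. a = b + c)"

lemma exp_dvd_iff_le: "exp_dvd b a \<longleftrightarrow> (\<forall>j. Poly_Mapping.lookup b j \<le> Poly_Mapping.lookup a j)"
proof
  assume "exp_dvd b a"
  then show "\<forall>j. Poly_Mapping.lookup b j \<le> Poly_Mapping.lookup a j"
    unfolding exp_dvd_def by (auto simp: lookup_add)
next
  assume le: "\<forall>j. Poly_Mapping.lookup b j \<le> Poly_Mapping.lookup a j"
  have "a = b + (a - b)"
    by (rule poly_mapping_eqI) (use le in \<open>simp add: lookup_add lookup_minus\<close>)
  then show "exp_dvd b a" unfolding exp_dvd_def by blast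
qed

lemma exp_dvd_refl [simp]: "exp_dvd a a"
  by (simp add: exp_dvd_iff_le)

lemma exp_dvd_trans: "exp_dvd a b \<Longrightarrow> exp_dvd b c \<Longrightarrow> exp_dvd a c"
  unfolding exp_dvd_iff_le by (meson order_trans)

lemma exp_dvd_add_left: "exp_dvd b (c + b)"
  unfolding exp_dvd_def by (metis add.commute)

lemma exp_dvd_add_mono: "exp_dvd a b \<Longrightarrow> exp_dvd c d \<Longrightarrow> exp_dvd (a + c) (b + d)"
  unfolding exp_dvd_iff_le by (simp add: lookup_add add_mono)

lemma exp_dvd_sum_list: "b \<in> set bs \<Longrightarrow> exp_dvd b (sum_list bs)"
  by (induction bs) (auto simp: exp_dvd_iff_le lookup_add intro: trans_le_add2)

lemma lookup_sum_list_eq_0: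
  "(\<And>b. b \<in> set bs \<Longrightarrow> Poly_Mapping.lookup b i = 0) \<Longrightarrow> Poly_Mapping.lookup (sum_list bs) i = 0"
  by (induction bs) (simp_all add: lookup_add)

lemma exp_dvd_update_zero:
  "Poly_Mapping.lookup b i = 0 \<Longrightarrow> exp_dvd b (Poly_Mapping.update i 0 a) \<longleftrightarrow> exp_dvd b a"
proof -
  assume "Poly_Mapping.lookup b i = 0"
  then have "Poly_Mapping.lookup b j \<le> Poly_Mapping.lookup (Poly_Mapping.update i 0 a) j
      \<longleftrightarrow> Poly_Mapping.lookup b j \<le> Poly_Mapping.lookup a j" for j
    by (cases "i = j") (simp_all add: lookup_update)
  then show ?thesis by (simp add: exp_dvd_iff_le)
qed

lemma monom_mult: "monom a * monom b = (monom (a + b) :: ('v, 'k::field) mpoly)"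
  by (simp add: monom_def mult_single)

lemma monom_zero: "monom 0 = (1 :: ('v, 'k::field) mpoly)"
  by (simp add: monom_def)

lemma keys_monom [simp]: "Poly_Mapping.keys (monom a :: ('v, 'k::field) mpoly) = {a}"
  by (simp add: monom_def)

lemma monom_dvd_monom_iff: "(monom b :: ('v, 'k::field) mpoly) dvd monom a \<longleftrightarrow> exp_dvd b a"
proof
  assume "monom b dvd (monom a :: ('v, 'k) mpoly)"
  then obtain q where "(monom a :: ('v, 'k) mpoly) = monom b * q" by (auto elim: dvdE)
  then have "a \<in> Poly_Mapping.keys (monom b * q)" by (metis keys_monom singletonI)
  then show "exp_dvd b a" using keys_mult[of "monom b" q] unfolding exp_dvd_def by auto
next
  assume "exp_dvd b a"
  then obtain c where "a = b + c" unfolding exp_dvd_def by blast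
  then show "monom b dvd (monom a :: ('v, 'k) mpoly)" by (simp flip: monom_mult)
qed

lemma var_dvd_monom_iff: "(var i :: ('v, 'k::field) mpoly) dvd monom a \<longleftrightarrow> Poly_Mapping.lookup a i \<noteq> 0"
  unfolding var_def monom_dvd_monom_iff exp_dvd_iff_le by (auto simp: lookup_single when_def)

lemma lookup_mult_monom:
  fixes p :: "('v, 'k::field) mpoly"
  shows "Poly_Mapping.lookup (p * monom t) (b + t) = Poly_Mapping.lookup p b"
proof -
  have "((1::'k) when t = c when b + t = a + c) = ((1 when a = b) when c = t)" for a c
    by (simp add: when_def)
  then show ?thesis
    by (simp add: lookup_mult monom_def lookup_single when_mult mult_when)
qed

lemma keys_mult_monom:
  fixes p :: "('v, 'k::field) mpoly"
  shows "Poly_Mapping.keys (p * monom t) = (\<lambda>a. a + t) ` Poly_Mapping.keys p"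
proof
  show "Poly_Mapping.keys (p * monom t) \<subseteq> (\<lambda>a. a + t) ` Poly_Mapping.keys p"
    using keys_mult[of p "monom t"] by auto
  show "(\<lambda>a. a + t) ` Poly_Mapping.keys p \<subseteq> Poly_Mapping.keys (p * monom t)"
    using lookup_mult_monom[of p t] by (auto simp: in_keys_iff)
qed

lemma poly_mapping_expansion:
  "p = (\<Sum>a\<in>Poly_Mapping.keys p. Poly_Mapping.single a (Poly_Mapping.lookup p a))"
  by (rule poly_mapping_eqI) (auto simp: lookup_sum lookup_single when_def in_keys_iff)

lemma is_ideal_ideal_gen: "is_ideal (ideal_gen S)"
  unfolding is_ideal_def ideal_gen_def by blast

lemma ideal_gen_subset: "S \<subseteq> ideal_gen S"
  unfolding ideal_gen_def by blast

lemma ideal_gen_least: "is_ideal J \<Longrightarrow> S \<subseteq> J \<Longrightarrow> ideal_gen S \<subseteq> J"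
  unfolding ideal_gen_def by blast

lemma ideal_gen_mono: "S \<subseteq> T \<Longrightarrow> ideal_gen S \<subseteq> ideal_gen T"
  by (meson ideal_gen_least ideal_gen_subset is_ideal_ideal_gen order_trans)

lemma ideal_add: "is_ideal J \<Longrightarrow> a \<in> J \<Longrightarrow> b \<in> J \<Longrightarrow> a + b \<in> J"
  by (simp add: is_ideal_def)

lemma ideal_mult: "is_ideal J \<Longrightarrow> a \<in> J \<Longrightarrow> r * a \<in> J"
  by (simp add: is_ideal_def)

lemma ideal_diff: "is_ideal J \<Longrightarrow> a \<in> J \<Longrightarrow> b \<in> J \<Longrightarrow> a - b \<in> J"
  using ideal_add[of J a "(-1) * b"] ideal_mult[of J b "-1"] by simp

lemma ideal_sum: "is_ideal J \<Longrightarrow> (\<And>x. x \<in> A \<Longrightarrow> f x \<in> J) \<Longrightarrow> sum f A \<in> J"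
  by (induction A rule: infinite_finite_induct) (auto simp: is_ideal_def)

lemma ideal_eq_UNIV_if_one: "is_ideal J \<Longrightarrow> 1 \<in> J \<Longrightarrow> J = UNIV"
  using ideal_mult[of J 1] by auto

lemma is_ideal_colon: "is_ideal J \<Longrightarrow> is_ideal {g. g * f \<in> J}"
  unfolding is_ideal_def by (simp add: distrib_right mult.assoc)

lemma prime_ideal_prod_not_mem:
  assumes "is_prime_ideal P" "finite A" "\<And>x. x \<in> A \<Longrightarrow> f x \<notin> P"
  shows "prod f A \<notin> P"
  using assms(2,3)
proof (induction A rule: finite_induct)
  case empty
  then show ?case using assms(1) ideal_eq_UNIV_if_one by (auto simp: is_prime_ideal_def)
next
  case (insert x A)
  then show ?case using assms(1) by (auto simp: is_prime_ideal_def)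
qed

lemma ideal_mult_mem_if_terms:
  fixes p q :: "('v, 'k::field) mpoly"
  assumes "is_ideal J" and "\<And>a. a \<in> Poly_Mapping.keys p \<Longrightarrow> q * monom a \<in> J"
  shows "q * p \<in> J"
proof -
  have "q * Poly_Mapping.single a c = Poly_Mapping.single 0 c * (q * monom a)" for a c
    by (simp add: monom_def mult_single algebra_simps)
  then have "q * p = (\<Sum>a\<in>Poly_Mapping.keys p. Poly_Mapping.single 0 (Poly_Mapping.lookup p a) * (q * monom a))"
    by (subst poly_mapping_expansion) (simp add: sum_distrib_left)
  also have "\<dots> \<in> J" by (rule ideal_sum[OF assms(1)], rule ideal_mult[OF assms(1)], rule assms(2))
  finally show ?thesis .
qed

lemma ideal_pow_mono: "A \<subseteq> B \<Longrightarrow> ideal_pow A s \<subseteq> ideal_pow B s"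
  unfolding ideal_pow_def by (rule ideal_gen_mono) blast

lemma ideal_pow_antimono:
  fixes I :: "('v, 'k::field) mpoly set"
  shows "s \<le> l \<Longrightarrow> ideal_pow I l \<subseteq> ideal_pow I s"
  unfolding ideal_pow_def
proof (rule ideal_gen_least[OF is_ideal_ideal_gen], safe)
  fix fs :: "('v, 'k) mpoly list"
  assume "s \<le> length fs" "set fs \<subseteq> I"
  then have "prod_list (take s fs) \<in> ideal_gen {prod_list fs | fs. length fs = s \<and> set fs \<subseteq> I}"
    by (intro subsetD[OF ideal_gen_subset] CollectI exI[of _ "take s fs"])
      (simp add: min_absorb2 subset_trans[OF set_take_subset])
  then have "prod_list (drop s fs) * prod_list (take s fs) \<in> ideal_gen {prod_list fs | fs. length fs = s \<and> set fs \<subseteq> I}"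
    by (rule ideal_mult[OF is_ideal_ideal_gen])
  then show "prod_list fs \<in> ideal_gen {prod_list fs | fs. length fs = s \<and> set fs \<subseteq> I}"
    using prod_list.append[of "take s fs" "drop s fs"] by (simp add: mult.commute)
qed

section \<open>Monomial ideals and their powers\<close>

definition monomial_ideal_of :: "('v \<Rightarrow>\<^sub>0 nat) set \<Rightarrow> ('v, 'k::field) mpoly set" where
  "monomial_ideal_of E = {p. \<forall>a\<in>Poly_Mapping.keys p. \<exists>b\<in>E. exp_dvd b a}"

lemma monom_mem_monomial_ideal_of: "monom a \<in> monomial_ideal_of E \<longleftrightarrow> (\<exists>b\<in>E. exp_dvd b a)"
  by (simp add: monomial_ideal_of_def)

lemma mem_monomial_ideal_of_iff_terms:
  "p \<in> monomial_ideal_of E \<longleftrightarrow> (\<forall>a\<in>Poly_Mapping.keys p. monom a \<in> monomial_ideal_of E)"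
  by (simp add: monomial_ideal_of_def)

lemma is_ideal_monomial_ideal_of: "is_ideal (monomial_ideal_of E :: ('v, 'k::field) mpoly set)"
  unfolding is_ideal_def
proof (intro conjI ballI allI)
  fix p q :: "('v, 'k) mpoly"
  assume "p \<in> monomial_ideal_of E" "q \<in> monomial_ideal_of E"
  then show "p + q \<in> monomial_ideal_of E"
    using keys_add[of p q] unfolding monomial_ideal_of_def by blast
next
  fix r p :: "('v, 'k) mpoly"
  assume p: "p \<in> monomial_ideal_of E"
  have "\<exists>b\<in>E. exp_dvd b c" if "c \<in> Poly_Mapping.keys (r * p)" for c
  proof -
    from that obtain a b where "c = a + b" "b \<in> Poly_Mapping.keys p"
      using keys_mult[of r p] by blast
    then show ?thesis using p unfolding monomial_ideal_of_def by (blast intro: exp_dvd_trans exp_dvd_add_left)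
  qed
  then show "r * p \<in> monomial_ideal_of E" unfolding monomial_ideal_of_def by blast
qed (simp add: monomial_ideal_of_def)

lemma ideal_gen_monom: "ideal_gen (monom ` E) = (monomial_ideal_of E :: ('v, 'k::field) mpoly set)"
proof
  have "monom b \<in> (monomial_ideal_of E :: ('v, 'k) mpoly set)" if "b \<in> E" for b
    unfolding monom_mem_monomial_ideal_of using that exp_dvd_refl by blast
  then show "ideal_gen (monom ` E) \<subseteq> (monomial_ideal_of E :: ('v, 'k) mpoly set)"
    by (intro ideal_gen_least[OF is_ideal_monomial_ideal_of]) blast
  show "(monomial_ideal_of E :: ('v, 'k) mpoly set) \<subseteq> ideal_gen (monom ` E)"
  proof
    fix p :: "('v, 'k) mpoly"
    assume p: "p \<in> monomial_ideal_of E"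
    have "1 * monom a \<in> ideal_gen (monom ` E)" if a: "a \<in> Poly_Mapping.keys p" for a
    proof -
      obtain b c where "b \<in> E" "a = b + c"
        using p a unfolding monomial_ideal_of_def exp_dvd_def by blast
      moreover from \<open>b \<in> E\<close> have "monom c * monom b \<in> ideal_gen (monom ` E)"
        using ideal_gen_subset by (intro ideal_mult[OF is_ideal_ideal_gen]) blast
      ultimately show ?thesis by (simp add: monom_mult add.commute)
    qed
    then have "1 * p \<in> ideal_gen (monom ` E)"
      by (rule ideal_mult_mem_if_terms[OF is_ideal_ideal_gen])
    then show "p \<in> ideal_gen (monom ` E)" by simp
  qed
qed

lemma monomial_ideal_iff: "monomial_ideal I \<longleftrightarrow> (\<exists>E. I = monomial_ideal_of E)"
  unfolding monomial_ideal_def monomials_def by (metis ideal_gen_monom subset_image_iff image_mono top_greatest)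

definition exp_sums :: "('v \<Rightarrow>\<^sub>0 nat) set \<Rightarrow> nat \<Rightarrow> ('v \<Rightarrow>\<^sub>0 nat) set" where
  "exp_sums E s = {sum_list bs | bs. length bs = s \<and> set bs \<subseteq> E}"

lemma prod_list_mem_monomial_ideal_of:
  fixes fs :: "('v, 'k::field) mpoly list"
  assumes "set fs \<subseteq> monomial_ideal_of E"
  shows "prod_list fs \<in> monomial_ideal_of (exp_sums E (length fs))"
  using assms
proof (induction fs)
  case Nil
  have "0 \<in> exp_sums E 0" unfolding exp_sums_def by force
  then show ?case using exp_dvd_refl by (force simp: monom_mem_monomial_ideal_of simp flip: monom_zero)
next
  case (Cons f fs)
  have sums: "a + b \<in> exp_sums E (length (f # fs))" if "a \<in> E" "b \<in> exp_sums E (length fs)" for a b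
  proof -
    obtain bs where "b = sum_list bs" "length bs = length fs" "set bs \<subseteq> E"
      using \<open>b \<in> exp_sums E (length fs)\<close> unfolding exp_sums_def by blast
    then show ?thesis using \<open>a \<in> E\<close> unfolding exp_sums_def by (intro CollectI exI[of _ "a # bs"]) simp
  qed
  have "\<exists>e\<in>exp_sums E (length (f # fs)). exp_dvd e c" if "c \<in> Poly_Mapping.keys (f * prod_list fs)" for c
  proof -
    from that obtain a b where "c = a + b" "a \<in> Poly_Mapping.keys f" "b \<in> Poly_Mapping.keys (prod_list fs)"
      using keys_mult[of f "prod_list fs"] by blast
    moreover have "f \<in> monomial_ideal_of E" "prod_list fs \<in> monomial_ideal_of (exp_sums E (length fs))"
      using Cons by auto
    ultimately show ?thesis
      unfolding monomial_ideal_of_def using sums exp_dvd_add_mono by blast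
  qed
  then show ?case unfolding monomial_ideal_of_def by simp
qed

lemma ideal_pow_monomial_ideal_of:
  "ideal_pow (monomial_ideal_of E) s = (monomial_ideal_of (exp_sums E s) :: ('v, 'k::field) mpoly set)"
proof
  show "ideal_pow (monomial_ideal_of E) s \<subseteq> (monomial_ideal_of (exp_sums E s) :: ('v, 'k) mpoly set)"
    unfolding ideal_pow_def
    by (rule ideal_gen_least[OF is_ideal_monomial_ideal_of]) (use prod_list_mem_monomial_ideal_of in fastforce)
  have monom_sum_list: "monom (sum_list bs) = prod_list (map monom bs :: ('v, 'k) mpoly list)" for bs
    by (induction bs) (simp_all add: monom_zero flip: monom_mult)
  have mem_E: "monom b \<in> (monomial_ideal_of E :: ('v, 'k) mpoly set)" if "b \<in> E" for b
    using that exp_dvd_refl by (force simp: monom_mem_monomial_ideal_of)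
  have "monom ` exp_sums E s \<subseteq>
      {prod_list fs | fs. length fs = s \<and> set fs \<subseteq> (monomial_ideal_of E :: ('v, 'k) mpoly set)}"
  proof
    fix x :: "('v, 'k) mpoly"
    assume "x \<in> monom ` exp_sums E s"
    then obtain bs where "x = monom (sum_list bs)" "length bs = s" "set bs \<subseteq> E"
      unfolding exp_sums_def by blast
    with monom_sum_list mem_E show "x \<in> {prod_list fs | fs. length fs = s \<and> set fs \<subseteq> monomial_ideal_of E}"
      by (intro CollectI exI[of _ "map monom bs"]) auto
  qed
  then show "(monomial_ideal_of (exp_sums E s) :: ('v, 'k) mpoly set) \<subseteq> ideal_pow (monomial_ideal_of E) s"
    unfolding ideal_pow_def ideal_gen_monom[symmetric] by (rule ideal_gen_mono)
qed

lemma monomial_ideal_ideal_pow: "monomial_ideal I \<Longrightarrow> monomial_ideal (ideal_pow I s)"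
  by (metis monomial_ideal_iff ideal_pow_monomial_ideal_of)

lemma monomial_ideal_of_subset_ideal:
  assumes "is_ideal J" "\<And>b. b \<in> E \<Longrightarrow> monom b \<in> J"
  shows "monomial_ideal_of E \<subseteq> J"
  unfolding ideal_gen_monom[symmetric] using assms by (intro ideal_gen_least) auto

section \<open>Minimal generators and deletion of a variable\<close>

lemma exp_dvd_sum_less:
  fixes a b :: "'v::finite \<Rightarrow>\<^sub>0 nat"
  assumes "exp_dvd b a" "b \<noteq> a"
  shows "(\<Sum>j\<in>UNIV. Poly_Mapping.lookup b j) < (\<Sum>j\<in>UNIV. Poly_Mapping.lookup a j)"
proof (rule sum_strict_mono_ex1)
  show "\<forall>j\<in>UNIV. Poly_Mapping.lookup b j \<le> Poly_Mapping.lookup a j"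
    using assms(1) by (simp add: exp_dvd_iff_le)
  show "\<exists>j\<in>UNIV. Poly_Mapping.lookup b j < Poly_Mapping.lookup a j"
    using assms by (metis UNIV_I exp_dvd_iff_le le_neq_implies_less poly_mapping_eqI)
qed simp

lemma exists_min_gens_exp_dvd:
  fixes I :: "('v::finite, 'k::field) mpoly set"
  shows "monom b \<in> I \<Longrightarrow> \<exists>w. monom w \<in> min_gens I \<and> exp_dvd w b"
proof (induction "\<Sum>j\<in>UNIV. Poly_Mapping.lookup b j" arbitrary: b rule: less_induct)
  case less
  show ?case
  proof (cases "monom b \<in> min_gens I")
    case False
    then obtain c where c: "monom c \<in> I" "(monom c :: ('v, 'k) mpoly) dvd monom b" "monom c \<noteq> (monom b :: ('v, 'k) mpoly)"
      using less.prems unfolding min_gens_def monomials_def by auto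
    then have "exp_dvd c b" "c \<noteq> b" by (auto simp: monom_dvd_monom_iff)
    then obtain w where "monom w \<in> min_gens I" "exp_dvd w c"
      using less.hyps[OF exp_dvd_sum_less c(1)] by blast
    with \<open>exp_dvd c b\<close> show ?thesis by (blast intro: exp_dvd_trans)
  qed auto
qed

lemma ideal_del_eq:
  "ideal_del I i = (monomial_ideal_of {a. monom a \<in> min_gens I \<and> Poly_Mapping.lookup a i = 0} :: ('v, 'k::field) mpoly set)"
proof -
  have "{u \<in> min_gens I. \<not> var i dvd u} = monom ` {a. monom a \<in> min_gens I \<and> Poly_Mapping.lookup a i = 0}"
    by (auto simp: min_gens_def monomials_def var_dvd_monom_iff)
  then show ?thesis unfolding ideal_del_def by (simp add: ideal_gen_monom)
qed

text \<open>A product of \<open>s\<close> generators dividing an \<open>x\<^sub>i\<close>-free monomial uses only \<open>x\<^sub>i\<close>-free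
  generators, and each of these is divisible by an \<open>x\<^sub>i\<close>-free minimal generator.\<close>

lemma monom_mem_ideal_pow_ideal_del_iff:
  fixes I :: "('v::finite, 'k::field) mpoly set"
  assumes "monomial_ideal I" and "Poly_Mapping.lookup x i = 0"
  shows "monom x \<in> ideal_pow (ideal_del I i) s \<longleftrightarrow> monom x \<in> ideal_pow I s"
proof
  obtain E where I: "I = monomial_ideal_of E"
    using assms(1) monomial_ideal_iff by blast
  have "ideal_del I i \<subseteq> I"
    unfolding ideal_del_def I by (rule ideal_gen_least[OF is_ideal_monomial_ideal_of]) (auto simp: min_gens_def)
  then show "monom x \<in> ideal_pow (ideal_del I i) s \<Longrightarrow> monom x \<in> ideal_pow I s"
    using ideal_pow_mono by blast
  define E0 where "E0 = {b \<in> E. Poly_Mapping.lookup b i = 0}"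
  have "monom b \<in> ideal_del I i" if "b \<in> E0" for b
  proof -
    have "monom b \<in> I" using that exp_dvd_refl unfolding E0_def I monom_mem_monomial_ideal_of by blast
    then obtain w where "monom w \<in> min_gens I" "exp_dvd w b" using exists_min_gens_exp_dvd by blast
    moreover from this have "Poly_Mapping.lookup w i = 0"
      using that unfolding E0_def exp_dvd_iff_le by (metis (mono_tags) le_zero_eq mem_Collect_eq)
    ultimately show ?thesis unfolding ideal_del_eq monom_mem_monomial_ideal_of by blast
  qed
  then have E0_del: "monomial_ideal_of E0 \<subseteq> ideal_del I i"
    by (intro monomial_ideal_of_subset_ideal) (simp_all add: ideal_del_def is_ideal_ideal_gen)
  assume "monom x \<in> ideal_pow I s"
  then obtain bs where bs: "length bs = s" "set bs \<subseteq> E" "exp_dvd (sum_list bs) x"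
    unfolding I ideal_pow_monomial_ideal_of monom_mem_monomial_ideal_of exp_sums_def by blast
  have "Poly_Mapping.lookup b i = 0" if "b \<in> set bs" for b
    using exp_dvd_trans[OF exp_dvd_sum_list[OF that] bs(3)] assms(2)
    by (metis exp_dvd_iff_le le_zero_eq)
  with bs have "monom x \<in> ideal_pow (monomial_ideal_of E0) s"
    unfolding ideal_pow_monomial_ideal_of monom_mem_monomial_ideal_of exp_sums_def E0_def by blast
  then show "monom x \<in> ideal_pow (ideal_del I i) s"
    using ideal_pow_mono[OF E0_del] by blast
qed

lemma monom_update_mem_ideal_pow_ideal_del_iff:
  fixes I :: "('v, 'k::field) mpoly set"
  shows "monom (Poly_Mapping.update i 0 x) \<in> ideal_pow (ideal_del I i) s \<longleftrightarrow> monom x \<in> ideal_pow (ideal_del I i) s"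
proof -
  have free: "Poly_Mapping.lookup e i = 0"
    if "e \<in> exp_sums {a. (monom a :: ('v, 'k) mpoly) \<in> min_gens I \<and> Poly_Mapping.lookup a i = 0} s" for e
  proof -
    from that obtain bs where e: "e = sum_list bs"
      and bs: "set bs \<subseteq> {a. (monom a :: ('v, 'k) mpoly) \<in> min_gens I \<and> Poly_Mapping.lookup a i = 0}"
      unfolding exp_sums_def by blast
    from bs have "\<And>b. b \<in> set bs \<Longrightarrow> Poly_Mapping.lookup b i = 0" by blast
    then show ?thesis unfolding e by (rule lookup_sum_list_eq_0)
  qed
  show ?thesis
    unfolding ideal_del_eq ideal_pow_monomial_ideal_of monom_mem_monomial_ideal_of
    by (rule bex_cong[OF refl], rule exp_dvd_update_zero, rule free)
qed

section \<open>Polynomials in finitely many variables form a domain\<close>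

text \<open>Exponent vectors embed additively into \<open>nat \<Rightarrow>\<^sub>0 nat\<close>, whose library order is linear and
  compatible with addition; maximal terms with respect to it multiply without cancellation.\<close>

definition exp_embedding :: "('v \<Rightarrow> nat) \<Rightarrow> ('v::finite \<Rightarrow>\<^sub>0 nat) \<Rightarrow> (nat \<Rightarrow>\<^sub>0 nat)" where
  "exp_embedding \<iota> a = (\<Sum>v\<in>UNIV. Poly_Mapping.single (\<iota> v) (Poly_Mapping.lookup a v))"

lemma lookup_exp_embedding:
  "inj \<iota> \<Longrightarrow> Poly_Mapping.lookup (exp_embedding \<iota> a) (\<iota> v) = Poly_Mapping.lookup a v"
  unfolding exp_embedding_def lookup_sum by (simp add: lookup_single when_def inj_eq)

lemma inj_exp_embedding: "inj \<iota> \<Longrightarrow> inj (exp_embedding \<iota>)"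
  by (rule injI, rule poly_mapping_eqI) (metis lookup_exp_embedding)

lemma exp_embedding_add: "exp_embedding \<iota> (a + b) = exp_embedding \<iota> a + exp_embedding \<iota> b"
  unfolding exp_embedding_def by (simp add: lookup_add single_add sum.distrib)

lemma lookup_mult_unique_sum:
  fixes f g :: "'a::cancel_comm_monoid_add \<Rightarrow>\<^sub>0 'b::semiring_0"
  assumes unique: "\<And>x y. x \<in> Poly_Mapping.keys f \<Longrightarrow> y \<in> Poly_Mapping.keys g \<Longrightarrow> x + y = a + b \<Longrightarrow> x = a \<and> y = b"
  shows "Poly_Mapping.lookup (f * g) (a + b) = Poly_Mapping.lookup f a * Poly_Mapping.lookup g b"
proof -
  have summand: "Poly_Mapping.lookup f x * (Poly_Mapping.lookup g y when a + b = x + y)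
      = ((Poly_Mapping.lookup f a * Poly_Mapping.lookup g b when x = a) when y = b)" for x y
    using unique[of x y]
    by (cases "Poly_Mapping.lookup f x = 0"; cases "Poly_Mapping.lookup g y = 0") (auto simp: when_def in_keys_iff)
  show ?thesis
    by (simp add: lookup_mult Sum_any_right_distrib summand)
qed

lemma obtain_key_maximizing:
  fixes f :: "'a \<Rightarrow>\<^sub>0 'b::zero" and h :: "'a \<Rightarrow> 'c::linorder"
  assumes "f \<noteq> 0"
  obtains a where "a \<in> Poly_Mapping.keys f" "\<And>x. x \<in> Poly_Mapping.keys f \<Longrightarrow> h x \<le> h a"
proof -
  have "Max (h ` Poly_Mapping.keys f) \<in> h ` Poly_Mapping.keys f" using assms by simp
  then obtain a where "a \<in> Poly_Mapping.keys f" "h a = Max (h ` Poly_Mapping.keys f)" by auto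
  then show thesis using that by simp
qed

lemma mult_not_zero_if_ordered_embedding:
  fixes f g :: "'a::cancel_comm_monoid_add \<Rightarrow>\<^sub>0 'b::semiring_no_zero_divisors"
    and h :: "'a \<Rightarrow> 'c::linordered_cancel_ab_semigroup_add"
  assumes "inj h" and h_add: "\<And>x y. h (x + y) = h x + h y" and "f \<noteq> 0" "g \<noteq> 0"
  shows "f * g \<noteq> 0"
proof -
  obtain a where a: "a \<in> Poly_Mapping.keys f" "\<And>x. x \<in> Poly_Mapping.keys f \<Longrightarrow> h x \<le> h a"
    using obtain_key_maximizing[OF \<open>f \<noteq> 0\<close>] by blast
  obtain b where b: "b \<in> Poly_Mapping.keys g" "\<And>y. y \<in> Poly_Mapping.keys g \<Longrightarrow> h y \<le> h b"
    using obtain_key_maximizing[OF \<open>g \<noteq> 0\<close>] by blast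
  have "x = a \<and> y = b"
    if "x \<in> Poly_Mapping.keys f" "y \<in> Poly_Mapping.keys g" "x + y = a + b" for x y
  proof -
    have sum: "h x + h y = h a + h b" using that(3) h_add by metis
    have "h x \<le> h a" "h y \<le> h b" using a(2)[OF that(1)] b(2)[OF that(2)] .
    then have "h x = h a" "h y = h b"
      using sum add_less_le_mono[of "h x" "h a" "h y" "h b"] add_le_less_mono[of "h x" "h a" "h y" "h b"]
      by (auto simp: order_less_le)
    then show ?thesis using \<open>inj h\<close> by (simp add: inj_eq)
  qed
  then have "Poly_Mapping.lookup (f * g) (a + b) = Poly_Mapping.lookup f a * Poly_Mapping.lookup g b"
    by (rule lookup_mult_unique_sum)
  also have "\<dots> \<noteq> 0" using a(1) b(1) by (simp add: in_keys_iff)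
  finally show ?thesis by auto
qed

lemma mpoly_mult_not_zero:
  fixes f g :: "('v::finite, 'k::field) mpoly"
  shows "f \<noteq> 0 \<Longrightarrow> g \<noteq> 0 \<Longrightarrow> f * g \<noteq> 0"
proof -
  obtain \<iota> :: "'v \<Rightarrow> nat" where "inj \<iota>"
    using finite_imp_inj_to_nat_seg[of "UNIV :: 'v set"] by auto
  then show "f \<noteq> 0 \<Longrightarrow> g \<noteq> 0 \<Longrightarrow> f * g \<noteq> 0"
    by (intro mult_not_zero_if_ordered_embedding[OF inj_exp_embedding exp_embedding_add])
qed

section \<open>Ideals generated by variables\<close>

definition var_ideal :: "'v set \<Rightarrow> ('v, 'k::field) mpoly set" where
  "var_ideal W = monomial_ideal_of ((\<lambda>j. Poly_Mapping.single j 1) ` W)"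

lemma mem_var_ideal_iff:
  "p \<in> var_ideal W \<longleftrightarrow> (\<forall>a\<in>Poly_Mapping.keys p. \<exists>j\<in>W. Poly_Mapping.lookup a j \<noteq> 0)"
  unfolding var_ideal_def monomial_ideal_of_def exp_dvd_iff_le
  by (auto simp: lookup_single when_def Suc_le_eq)

lemma monom_mem_var_ideal_iff:
  "monom a \<in> var_ideal W \<longleftrightarrow> (\<exists>j\<in>W. Poly_Mapping.lookup a j \<noteq> 0)"
  by (simp add: mem_var_ideal_iff)

lemma ideal_gen_var: "ideal_gen (var ` W) = (var_ideal W :: ('v, 'k::field) mpoly set)"
proof -
  have "(var ` W :: ('v, 'k) mpoly set) = monom ` (\<lambda>j. Poly_Mapping.single j 1) ` W"
    by (auto simp: var_def)
  then show ?thesis by (simp only: var_ideal_def ideal_gen_monom)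
qed

lemma is_ideal_var_ideal: "is_ideal (var_ideal W)"
  unfolding var_ideal_def by (rule is_ideal_monomial_ideal_of)

lemma prime_del_var_ideal: "prime_del (var_ideal V) i = (var_ideal (V - {i}) :: ('v, 'k::field) mpoly set)"
proof -
  have "{j. (var j :: ('v, 'k) mpoly) \<in> var_ideal V \<and> j \<noteq> i} = V - {i}"
    by (auto simp: var_def monom_mem_var_ideal_iff lookup_single when_def)
  then show ?thesis unfolding prime_del_def by (simp add: ideal_gen_var)
qed

text \<open>The substitution \<open>x\<^sub>j \<mapsto> 0\<close> for \<open>j \<in> W\<close>.\<close>

definition var_free_part :: "'v set \<Rightarrow> ('v, 'k::field) mpoly \<Rightarrow> ('v, 'k) mpoly" where
  "var_free_part W p = Abs_poly_mapping (\<lambda>a. if \<forall>j\<in>W. Poly_Mapping.lookup a j = 0 then Poly_Mapping.lookup p a else 0)"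

lemma lookup_var_free_part:
  "Poly_Mapping.lookup (var_free_part W p) a = (if \<forall>j\<in>W. Poly_Mapping.lookup a j = 0 then Poly_Mapping.lookup p a else 0)"
proof -
  have "finite {a. (if \<forall>j\<in>W. Poly_Mapping.lookup a j = 0 then Poly_Mapping.lookup p a else 0) \<noteq> 0}"
    by (rule finite_subset[OF _ finite_lookup[of p]]) auto
  then show ?thesis unfolding var_free_part_def by simp
qed

lemma var_free_part_eq_0_iff: "var_free_part W p = 0 \<longleftrightarrow> p \<in> var_ideal W"
proof -
  have "var_free_part W p = 0 \<longleftrightarrow> (\<forall>a. (\<forall>j\<in>W. Poly_Mapping.lookup a j = 0) \<longrightarrow> Poly_Mapping.lookup p a = 0)"
    by (auto simp: poly_mapping_eq_iff fun_eq_iff lookup_var_free_part)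
  also have "\<dots> \<longleftrightarrow> p \<in> var_ideal W"
    by (auto simp: mem_var_ideal_iff in_keys_iff) (metis in_keys_iff less_irrefl)
  finally show ?thesis .
qed

lemma diff_var_free_part_mem_var_ideal: "p - var_free_part W p \<in> var_ideal W"
  unfolding mem_var_ideal_iff by (auto simp: in_keys_iff lookup_minus lookup_var_free_part split: if_splits)

lemma var_free_part_mult_var_free_part:
  "var_free_part W (var_free_part W p * var_free_part W q) = var_free_part W p * var_free_part W q"
proof -
  have free: "\<forall>j\<in>W. Poly_Mapping.lookup c j = 0" if "c \<in> Poly_Mapping.keys (var_free_part W p * var_free_part W q)" for c
  proof -
    from that obtain a b where "c = a + b"
      "a \<in> Poly_Mapping.keys (var_free_part W p)" "b \<in> Poly_Mapping.keys (var_free_part W q)"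
      using keys_mult by blast
    then show ?thesis by (auto simp: in_keys_iff lookup_var_free_part lookup_add split: if_splits)
  qed
  show ?thesis
    by (rule poly_mapping_eqI) (use free in \<open>force simp: lookup_var_free_part in_keys_iff\<close>)
qed

lemma is_prime_ideal_var_ideal:
  "is_prime_ideal (var_ideal W :: ('v::finite, 'k::field) mpoly set)"
  unfolding is_prime_ideal_def
proof (intro conjI allI impI)
  show "is_ideal (var_ideal W :: ('v, 'k) mpoly set)" by (rule is_ideal_var_ideal)
  show "(var_ideal W :: ('v, 'k) mpoly set) \<noteq> UNIV"
    using monom_mem_var_ideal_iff[of 0 W] by auto
next
  fix p q :: "('v, 'k) mpoly"
  assume pq: "p * q \<in> var_ideal W"
  define p0 q0 where "p0 = var_free_part W p" and "q0 = var_free_part W q"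
  have "p0 * q0 = p * q - ((p - p0) * q + p0 * (q - q0))" by (simp add: algebra_simps)
  also have "\<dots> \<in> var_ideal W"
    using pq diff_var_free_part_mem_var_ideal is_ideal_var_ideal unfolding p0_def q0_def
    by (metis ideal_add ideal_diff ideal_mult mult.commute)
  finally have "p0 * q0 = 0"
    using var_free_part_mult_var_free_part var_free_part_eq_0_iff unfolding p0_def q0_def by metis
  then have "p0 = 0 \<or> q0 = 0" using mpoly_mult_not_zero by blast
  then show "p \<in> var_ideal W \<or> q \<in> var_ideal W"
    unfolding p0_def q0_def var_free_part_eq_0_iff .
qed

section \<open>Associated primes of monomial ideals\<close>

lemma prime_colon_subset_colon_term:
  fixes J :: "('v, 'k::field) mpoly set"
  assumes J: "is_ideal J" and prime: "is_prime_ideal P" and P: "P = {g. g * f \<in> J}"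
  shows "\<exists>t\<in>Poly_Mapping.keys f. {g. g * monom t \<in> J} \<subseteq> P"
  \<comment> \<open>otherwise a product of witnesses, one per term of \<open>f\<close>,
    avoids \<open>P\<close> but multiplies \<open>f\<close> into \<open>J\<close>\<close>
proof (rule ccontr)
  assume "\<not> ?thesis"
  then have "\<forall>t\<in>Poly_Mapping.keys f. \<exists>h. h * monom t \<in> J \<and> h \<notin> P" by blast
  from bchoice[OF this] obtain g where g: "\<forall>t\<in>Poly_Mapping.keys f. g t * monom t \<in> J \<and> g t \<notin> P"
    by blast
  define G where "G = prod g (Poly_Mapping.keys f)"
  have "G \<notin> P"
    unfolding G_def using g by (intro prime_ideal_prod_not_mem[OF prime]) auto
  moreover have "G * monom t \<in> J" if t: "t \<in> Poly_Mapping.keys f" for t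
  proof -
    have "G * monom t = prod g (Poly_Mapping.keys f - {t}) * (g t * monom t)"
      unfolding G_def using t by (simp add: prod.remove algebra_simps)
    then show ?thesis using g t ideal_mult[OF J] by auto
  qed
  then have "G * f \<in> J" by (rule ideal_mult_mem_if_terms[OF J])
  ultimately show False using P by blast
qed

lemma var_ideal_subset_colon_term:
  fixes J :: "('v, 'k::field) mpoly set"
  assumes "monomial_ideal J" and P: "var_ideal V = {g. g * f \<in> J}" and t: "t \<in> Poly_Mapping.keys f"
  shows "var_ideal V \<subseteq> {g. g * monom t \<in> J}"
proof -
  obtain F where J: "J = monomial_ideal_of F" using assms(1) monomial_ideal_iff by blast
  have "var j * monom t \<in> J" if "j \<in> V" for j
  proof -
    have "var j \<in> (var_ideal V :: ('v, 'k) mpoly set)"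
      using that ideal_gen_subset ideal_gen_var by blast
    then have "f * monom (Poly_Mapping.single j 1) \<in> J" using P by (simp add: var_def mult.commute)
    moreover have "t + Poly_Mapping.single j 1 \<in> Poly_Mapping.keys (f * monom (Poly_Mapping.single j 1))"
      using t by (simp add: keys_mult_monom)
    ultimately have "monom (t + Poly_Mapping.single j 1) \<in> J"
      using mem_monomial_ideal_of_iff_terms unfolding J by blast
    then show ?thesis by (simp add: var_def monom_mult add.commute)
  qed
  then have "ideal_gen (var ` V) \<subseteq> {g. g * monom t \<in> J}"
    by (intro ideal_gen_least is_ideal_colon) (auto simp: J is_ideal_monomial_ideal_of)
  then show ?thesis by (simp add: ideal_gen_var)
qed

lemma Ass_var_ideal_colon_monom:
  fixes J :: "('v, 'k::field) mpoly set"
  assumes "monomial_ideal J" and "var_ideal V \<in> Ass J"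
  obtains t where "monom t \<notin> J" "var_ideal V = {g. g * monom t \<in> J}"
proof -
  obtain f where prime: "is_prime_ideal (var_ideal V :: ('v, 'k) mpoly set)"
    and P: "var_ideal V = {g. g * f \<in> J}"
    using assms(2) unfolding Ass_def by blast
  obtain F where "J = monomial_ideal_of F" using assms(1) monomial_ideal_iff by blast
  then have "is_ideal J" by (simp add: is_ideal_monomial_ideal_of)
  then obtain t where "t \<in> Poly_Mapping.keys f" "{g. g * monom t \<in> J} \<subseteq> var_ideal V"
    using prime P by (blast dest: prime_colon_subset_colon_term)
  with var_ideal_subset_colon_term[OF assms(1) P] have colon: "var_ideal V = {g. g * monom t \<in> J}"
    by blast
  moreover have "monom t \<notin> J"
  proof
    assume "monom t \<in> J"
    then have "(1 :: ('v, 'k) mpoly) \<in> var_ideal V" unfolding colon by simp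
    then show False using prime ideal_eq_UNIV_if_one unfolding is_prime_ideal_def by blast
  qed
  ultimately show thesis using that by blast
qed

lemma var_ideal_del_eq_colon:
  fixes I :: "('v::finite, 'k::field) mpoly set"
  assumes I: "monomial_ideal I"
    and colon: "var_ideal V = {g. g * monom t \<in> ideal_pow I s}"
    and "\<not> var i dvd monom t"
  shows "var_ideal (V - {i}) = {g. g * monom t \<in> ideal_pow (ideal_del I i) s}"
proof -
  from assms(3) have t: "Poly_Mapping.lookup t i = 0" by (simp add: var_dvd_monom_iff)
  let ?J = "ideal_pow (ideal_del I i) s"
  have key: "monom (a + t) \<in> ?J \<longleftrightarrow> (\<exists>j\<in>V - {i}. Poly_Mapping.lookup a j \<noteq> 0)" for a
  proof -
    have "Poly_Mapping.update i 0 (a + t) = Poly_Mapping.update i 0 a + t"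
      by (rule poly_mapping_eqI) (use t in \<open>auto simp: lookup_update lookup_add\<close>)
    then have "monom (a + t) \<in> ?J \<longleftrightarrow> monom (Poly_Mapping.update i 0 a + t) \<in> ?J"
      by (metis monom_update_mem_ideal_pow_ideal_del_iff)
    also have "\<dots> \<longleftrightarrow> monom (Poly_Mapping.update i 0 a + t) \<in> ideal_pow I s"
      using I by (rule monom_mem_ideal_pow_ideal_del_iff) (simp add: lookup_add lookup_update t)
    also have "\<dots> \<longleftrightarrow> (monom (Poly_Mapping.update i 0 a) :: ('v, 'k) mpoly) \<in> var_ideal V"
      unfolding colon by (simp add: monom_mult)
    also have "\<dots> \<longleftrightarrow> (\<exists>j\<in>V - {i}. Poly_Mapping.lookup a j \<noteq> 0)"
      unfolding monom_mem_var_ideal_iff by (auto simp: lookup_update)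
    finally show ?thesis .
  qed
  have "g \<in> var_ideal (V - {i}) \<longleftrightarrow> g * monom t \<in> ?J" for g
  proof -
    have "g \<in> var_ideal (V - {i}) \<longleftrightarrow> (\<forall>a\<in>Poly_Mapping.keys g. monom (a + t) \<in> ?J)"
      unfolding mem_var_ideal_iff key ..
    also have "\<dots> \<longleftrightarrow> g * monom t \<in> ?J"
      unfolding ideal_del_eq ideal_pow_monomial_ideal_of
      by (subst (2) mem_monomial_ideal_of_iff_terms) (simp add: keys_mult_monom)
    finally show ?thesis .
  qed
  then show ?thesis by blast
qed

lemma squarefree_monomial_obtains_var:
  fixes v :: "('v, 'k::field) mpoly"
  assumes "squarefree_monomial v" "is_ideal J" "v \<in> J" "monom t \<notin> J"
  obtains i where "var i dvd v" "\<not> var i dvd monom t"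
proof -
  obtain a where v: "v = monom a" "\<And>j. Poly_Mapping.lookup a j \<le> 1"
    using assms(1) unfolding squarefree_monomial_def by blast
  have "\<not> exp_dvd a t"
  proof
    assume "exp_dvd a t"
    then obtain c where "monom t = monom c * v" unfolding exp_dvd_def v(1) by (auto simp: monom_mult add.commute)
    with assms(2,3,4) show False using ideal_mult by metis
  qed
  then obtain i where "Poly_Mapping.lookup t i < Poly_Mapping.lookup a i"
    unfolding exp_dvd_iff_le by (auto simp: not_le)
  with v(2)[of i] have "Poly_Mapping.lookup a i \<noteq> 0" "Poly_Mapping.lookup t i = 0" by linarith+
  with that show thesis unfolding v(1) var_dvd_monom_iff by blast
qed

theorem proposition2p2:
  fixes I P :: "('v::finite, 'k::field) mpoly set"
    and v :: "('v, 'k) mpoly"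
    and l s :: nat
  assumes "monomial_ideal I"
    and "l > 0"
    and "squarefree_monomial v"
    and "v \<in> ideal_pow I l"
    and "monomial_prime P"
    and "s > 0"
    and "\<forall>i. var i dvd v \<longrightarrow> prime_del P i \<notin> Ass (ideal_pow (ideal_del I i) s)"
    and "P \<in> Ass (ideal_pow I s)"
  shows "s > l"
proof (rule ccontr)
  assume "\<not> s > l"
  then have "ideal_pow I l \<subseteq> ideal_pow I s" by (intro ideal_pow_antimono) simp
  with assms(4) have v_I: "v \<in> ideal_pow I s" by blast
  obtain V where P: "P = var_ideal V"
    using assms(5) unfolding monomial_prime_def ideal_gen_var by blast
  from assms(1) have "monomial_ideal (ideal_pow I s)" by (rule monomial_ideal_ideal_pow)
  then obtain t where t: "monom t \<notin> ideal_pow I s" "var_ideal V = {g. g * monom t \<in> ideal_pow I s}"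
    using assms(8) unfolding P by (rule Ass_var_ideal_colon_monom)
  have "is_ideal (ideal_pow I s)" unfolding ideal_pow_def by (rule is_ideal_ideal_gen)
  then obtain i where i: "var i dvd v" "\<not> var i dvd monom t"
    by (rule squarefree_monomial_obtains_var[OF assms(3) _ v_I t(1)])
  have "var_ideal (V - {i}) = {g. g * monom t \<in> ideal_pow (ideal_del I i) s}"
    using assms(1) t(2) i(2) by (rule var_ideal_del_eq_colon)
  then have "prime_del P i \<in> Ass (ideal_pow (ideal_del I i) s)"
    unfolding Ass_def P prime_del_var_ideal using is_prime_ideal_var_ideal by blast
  with assms(7) i(1) show False by blast
qed

end
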